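(* Let $f:\mathcal{P}^n\to X$ be an onto, efficient, anonymous and tops-only rule. Then $f$ is NOM if and only if either $V_i=\emptyset$ for each $i\in N$, or there is $y\in X$ such that $SV_i=V_i=\{y\}$ for each $i\in N$.
   Context: $N=\{1,\dots,n\}$, $n\ge2$, agents; $X$ finite alternatives, $|X|\ge2$; $\mathcal{P}$ all strict linear orders on $X$; $t(P_i)$ the top of $P_i$. A rule $f:\mathcal{P}^n\to X$ is onto; tops-only if $f(P)=f(P')$ whenever all tops coincide; efficient if for each $P$ there is no $x$ with $xP_if(P)$ for all $i$; anonymous if $f(P_1,\dots,P_n)=f(P_{\sigma(1)},\dots,P_{\sigma(n)})$ for every permutation $\sigma$ of $N$. Option set $O^f(P_i)=\{f(P_i,P_{-i}):P_{-i}\in\mathcal{P}^{n-1}\}$. $P_i'$ is a manipulation at $P_i$ if $f(P_i',P_{-i})P_if(P_i,P_{-i})$ for some $P_{-i}$; it is obvious if the $P_i$-worst element of $O^f(P_i')$ is strictly $P_i$-better than that of $O^f(P_i)$, or the $P_i$-best element of $O^f(P_i')$ is strictly $P_i$-better than that of $O^f(P_i)$. $f$ is NOM if there are no obvious manipulations. Agent $i$ vetoes $x$ via $P_i$ if $x\notin O^f(P_i)$; $V_i$ = alternatives $i$ vetoes via some preference; $\mathcal{V}_i^x$ = preferences via which $i$ vetoes $x$; $i$ strongly vetoes $x$ if $\mathcal{V}_i^x=\{P_i:t(P_i)\ne x\}$; $SV_i$ = set of alternatives strongly vetoed by $i$. *)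

theory Defs
  imports Main "HOL-Combinatorics.Permutations"
begin

text \<open>A preference is a strict linear order R on 'x, where (a,b) in R means a is strictly
  preferred to b. A profile is a function from agents to preferences; entries for
  indices >= n are fixed to the empty relation so that profiles correspond exactly
  to elements of the n-fold product of preferences.\<close>

definition prefs :: "('x \<times> 'x) set set" where
  "prefs = {R. strict_linear_order R}"

definition profiles :: "nat \<Rightarrow> (nat \<Rightarrow> ('x \<times> 'x) set) set" where
  "profiles n = {P. (\<forall>i<n. P i \<in> prefs) \<and> (\<forall>i. n \<le> i \<longrightarrow> P i = {})}"

definition pref_top :: "('x \<times> 'x) set \<Rightarrow> 'x" where
  "pref_top R = (THE x. \<forall>y. y \<noteq> x \<longrightarrow> (x, y) \<in> R)"

definition onto :: "nat \<Rightarrow> ((nat \<Rightarrow> ('x \<times> 'x) set) \<Rightarrow> 'x) \<Rightarrow> bool" where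
  "onto n f \<longleftrightarrow> f ` profiles n = UNIV"

definition tops_only :: "nat \<Rightarrow> ((nat \<Rightarrow> ('x \<times> 'x) set) \<Rightarrow> 'x) \<Rightarrow> bool" where
  "tops_only n f \<longleftrightarrow> (\<forall>P\<in>profiles n. \<forall>P'\<in>profiles n.
      (\<forall>i<n. pref_top (P i) = pref_top (P' i)) \<longrightarrow> f P = f P')"

definition efficient :: "nat \<Rightarrow> ((nat \<Rightarrow> ('x \<times> 'x) set) \<Rightarrow> 'x) \<Rightarrow> bool" where
  "efficient n f \<longleftrightarrow> (\<forall>P\<in>profiles n. \<not> (\<exists>x. \<forall>i<n. (x, f P) \<in> P i))"

definition anonymous :: "nat \<Rightarrow> ((nat \<Rightarrow> ('x \<times> 'x) set) \<Rightarrow> 'x) \<Rightarrow> bool" where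
  "anonymous n f \<longleftrightarrow> (\<forall>P\<in>profiles n. \<forall>\<sigma>. \<sigma> permutes {0..<n} \<longrightarrow> f P = f (P \<circ> \<sigma>))"

definition option_set :: "nat \<Rightarrow> ((nat \<Rightarrow> ('x \<times> 'x) set) \<Rightarrow> 'x) \<Rightarrow> nat \<Rightarrow> ('x \<times> 'x) set \<Rightarrow> 'x set" where
  "option_set n f i R = {f (P(i := R)) | P. P \<in> profiles n}"

definition worst :: "('x \<times> 'x) set \<Rightarrow> 'x set \<Rightarrow> 'x" where
  "worst R S = (THE w. w \<in> S \<and> (\<forall>y\<in>S. y \<noteq> w \<longrightarrow> (y, w) \<in> R))"

definition best :: "('x \<times> 'x) set \<Rightarrow> 'x set \<Rightarrow> 'x" where
  "best R S = (THE b. b \<in> S \<and> (\<forall>y\<in>S. y \<noteq> b \<longrightarrow> (b, y) \<in> R))"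

definition manipulation :: "nat \<Rightarrow> ((nat \<Rightarrow> ('x \<times> 'x) set) \<Rightarrow> 'x) \<Rightarrow> nat \<Rightarrow> ('x \<times> 'x) set \<Rightarrow> ('x \<times> 'x) set \<Rightarrow> bool" where
  "manipulation n f i R R' \<longleftrightarrow> (\<exists>P\<in>profiles n. (f (P(i := R')), f (P(i := R))) \<in> R)"

definition obvious_manipulation :: "nat \<Rightarrow> ((nat \<Rightarrow> ('x \<times> 'x) set) \<Rightarrow> 'x) \<Rightarrow> nat \<Rightarrow> ('x \<times> 'x) set \<Rightarrow> ('x \<times> 'x) set \<Rightarrow> bool" where
  "obvious_manipulation n f i R R' \<longleftrightarrow> manipulation n f i R R' \<and>
     ((worst R (option_set n f i R'), worst R (option_set n f i R)) \<in> R \<or>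
      (best R (option_set n f i R'), best R (option_set n f i R)) \<in> R)"

definition NOM :: "nat \<Rightarrow> ((nat \<Rightarrow> ('x \<times> 'x) set) \<Rightarrow> 'x) \<Rightarrow> bool" where
  "NOM n f \<longleftrightarrow> (\<forall>i<n. \<forall>R\<in>prefs. \<forall>R'\<in>prefs. \<not> obvious_manipulation n f i R R')"

definition veto_prefs :: "nat \<Rightarrow> ((nat \<Rightarrow> ('x \<times> 'x) set) \<Rightarrow> 'x) \<Rightarrow> nat \<Rightarrow> 'x \<Rightarrow> ('x \<times> 'x) set set" where
  "veto_prefs n f i x = {R\<in>prefs. x \<notin> option_set n f i R}"

definition vetoed :: "nat \<Rightarrow> ((nat \<Rightarrow> ('x \<times> 'x) set) \<Rightarrow> 'x) \<Rightarrow> nat \<Rightarrow> 'x set" where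
  "vetoed n f i = {x. \<exists>R\<in>prefs. x \<notin> option_set n f i R}"

definition strongly_vetoes :: "nat \<Rightarrow> ((nat \<Rightarrow> ('x \<times> 'x) set) \<Rightarrow> 'x) \<Rightarrow> nat \<Rightarrow> 'x \<Rightarrow> bool" where
  "strongly_vetoes n f i x \<longleftrightarrow> veto_prefs n f i x = {R\<in>prefs. pref_top R \<noteq> x}"

definition strongly_vetoed :: "nat \<Rightarrow> ((nat \<Rightarrow> ('x \<times> 'x) set) \<Rightarrow> 'x) \<Rightarrow> nat \<Rightarrow> 'x set" where
  "strongly_vetoed n f i = {x. strongly_vetoes n f i x}"

end

theory Submission
  imports Defs
begin

text \<open>Efficiency makes the outcome always some agent's top, so each agent can obtain
  his own top, and that is the best element of every option set: the best case can never
  be improved. Under NOM a veto must therefore be strong: if agent \<open>i\<close> vetoes \<open>x\<close>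
  through some report but \<open>x\<close> were an option at a preference with top \<open>\<noteq> x\<close>, then
  moving \<open>x\<close> to the bottom (which keeps the option set, by tops-onlyness) makes \<open>x\<close>
  the worst option, and the vetoing report is an obvious manipulation. Two different
  strongly vetoed alternatives \<open>x \<noteq> z\<close> are impossible once anonymity spreads the vetoes
  over two agents: at the profile where one agent has top \<open>x\<close> and all others top \<open>z\<close>,
  the outcome is \<open>x\<close> or \<open>z\<close>, yet both are vetoed. Conversely, if the only vetoed
  alternative is strongly vetoed, the worst option at the true preference remains an
  option at every report, so the worst case cannot be improved either.\<close>

lemma prefs_trans: "R \<in> prefs \<Longrightarrow> (x, y) \<in> R \<Longrightarrow> (y, z) \<in> R \<Longrightarrow> (x, z) \<in> R"
  by (auto simp: prefs_def strict_linear_order_on_def dest: transD)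

lemma prefs_total: "R \<in> prefs \<Longrightarrow> x \<noteq> y \<Longrightarrow> (x, y) \<in> R \<or> (y, x) \<in> R"
  by (auto simp: prefs_def strict_linear_order_on_def total_on_def)

lemma prefs_irrefl: "R \<in> prefs \<Longrightarrow> (x, x) \<notin> R"
  by (auto simp: prefs_def strict_linear_order_on_def irrefl_def)

lemma prefs_asym: "R \<in> prefs \<Longrightarrow> (x, y) \<in> R \<Longrightarrow> (y, x) \<notin> R"
  by (metis prefs_trans prefs_irrefl)

lemma converse_in_prefs: "R \<in> prefs \<Longrightarrow> R\<inverse> \<in> prefs"
  by (simp add: prefs_def strict_linear_order_on_def)

lemma ranking_in_prefs:
  fixes r :: "'x \<Rightarrow> 'a::linorder"
  assumes "inj r"
  shows "{(x, y). r x < r y} \<in> prefs"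
proof -
  have "r x \<noteq> r y" if "x \<noteq> y" for x y
    using assms that by (auto dest: injD)
  then show ?thesis
    by (auto simp: prefs_def strict_linear_order_on_def total_on_def irrefl_def neq_iff
        intro!: transI)
qed

subsection \<open>Worst and best elements, and the top\<close>

lemma ex_worst:
  assumes "R \<in> prefs" "finite S" "S \<noteq> {}"
  shows "\<exists>w\<in>S. \<forall>y\<in>S. y \<noteq> w \<longrightarrow> (y, w) \<in> R"
  using assms(2,3)
proof (induction S rule: finite_ne_induct)
  case (singleton x)
  then show ?case by auto
next
  case (insert x F)
  then obtain w where w: "w \<in> F" "\<forall>y\<in>F. y \<noteq> w \<longrightarrow> (y, w) \<in> R"
    by auto
  show ?case
  proof (cases "(x, w) \<in> R")
    case True
    then show ?thesis using w by auto
  next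
    case False
    then have "(w, x) \<in> R"
      using prefs_total[OF assms(1), of x w] w insert.hyps by auto
    then have "(y, x) \<in> R" if "y \<in> F" for y
      using w that prefs_trans[OF assms(1), of y w x] by (cases "y = w") auto
    then show ?thesis by blast
  qed
qed

lemma worst_eqI:
  assumes "R \<in> prefs" "w \<in> S" "\<forall>y\<in>S. y \<noteq> w \<longrightarrow> (y, w) \<in> R"
  shows "worst R S = w"
  unfolding worst_def
proof (rule the_equality)
  fix v assume v: "v \<in> S \<and> (\<forall>y\<in>S. y \<noteq> v \<longrightarrow> (y, v) \<in> R)"
  show "v = w"
    using v assms(2,3) prefs_asym[OF assms(1)] by metis
qed (use assms in blast)

lemma
  assumes "R \<in> prefs" "finite S" "S \<noteq> {}"
  shows worst_in: "worst R S \<in> S"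
    and worst_below: "y \<in> S \<Longrightarrow> y \<noteq> worst R S \<Longrightarrow> (y, worst R S) \<in> R"
proof -
  obtain w where "w \<in> S" "\<forall>y\<in>S. y \<noteq> w \<longrightarrow> (y, w) \<in> R"
    using ex_worst[OF assms] by blast
  moreover from this have "worst R S = w"
    using worst_eqI[OF assms(1)] by blast
  ultimately show "worst R S \<in> S" "y \<in> S \<Longrightarrow> y \<noteq> worst R S \<Longrightarrow> (y, worst R S) \<in> R"
    by auto
qed

lemma worst_not_above:
  assumes "R \<in> prefs" "finite S'" "worst R S \<in> S'"
  shows "(worst R S', worst R S) \<notin> R"
  using worst_below[OF assms(1,2), of "worst R S"] assms prefs_irrefl[OF assms(1)]
    prefs_asym[OF assms(1)]
  by (cases "worst R S' = worst R S") auto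

lemma best_eq_worst_converse: "best R S = worst (R\<inverse>) S"
  by (simp add: best_def worst_def)

lemma pref_top_eq_best: "pref_top R = best R UNIV"
  by (simp add: pref_top_def best_def)

lemma best_eqI:
  assumes "R \<in> prefs" "b \<in> S" "\<forall>y\<in>S. y \<noteq> b \<longrightarrow> (b, y) \<in> R"
  shows "best R S = b"
  using worst_eqI[OF converse_in_prefs[OF assms(1)]] assms(2,3)
  by (simp add: best_eq_worst_converse)

lemma pref_top_eqI:
  assumes "R \<in> prefs" "\<forall>y. y \<noteq> a \<longrightarrow> (a, y) \<in> R"
  shows "pref_top R = a"
  using best_eqI[OF assms(1), of a UNIV] assms(2) by (simp add: pref_top_eq_best)

lemma pref_top_above:
  fixes R :: "('x::finite \<times> 'x) set"
  assumes "R \<in> prefs" "y \<noteq> pref_top R"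
  shows "(pref_top R, y) \<in> R"
  using worst_below[OF converse_in_prefs[OF assms(1)], of UNIV y] assms(2)
  by (simp add: pref_top_eq_best best_eq_worst_converse)

lemma not_above_pref_top:
  fixes R :: "('x::finite \<times> 'x) set"
  assumes "R \<in> prefs"
  shows "(y, pref_top R) \<notin> R"
  using pref_top_above[OF assms, of y] prefs_irrefl[OF assms] prefs_asym[OF assms]
  by (cases "y = pref_top R") auto

lemma ex_pref_top_bottom:
  fixes a z :: "'x::finite"
  assumes "a \<noteq> z"
  shows "\<exists>R\<in>prefs. pref_top R = a \<and> (\<forall>y. y \<noteq> z \<longrightarrow> (y, z) \<in> R)"
proof -
  obtain r0 :: "'x \<Rightarrow> nat" and m where r0: "r0 ` UNIV = {i. i < m}" "inj r0"
    using finite_imp_inj_to_nat_seg[of "UNIV :: 'x set"] by auto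
  have r0_less: "r0 y < m" for y
    using r0(1) by auto
  define r where "r y = (if y = a then 0 else if y = z then m + 1 else r0 y + 1)" for y
  have "inj r"
    using r0(2) r0_less assms by (auto simp: inj_def r_def split: if_splits)
  define R where "R = {(x, y). r x < r y}"
  have R: "R \<in> prefs"
    unfolding R_def using ranking_in_prefs[OF \<open>inj r\<close>] .
  moreover have "pref_top R = a"
    using pref_top_eqI[OF R] by (auto simp: R_def r_def)
  moreover have "\<forall>y. y \<noteq> z \<longrightarrow> (y, z) \<in> R"
    using assms r0_less by (auto simp: R_def r_def)
  ultimately show ?thesis by blast
qed

lemma ex_other:
  assumes "card (UNIV :: 'x::finite set) \<ge> 2"
  shows "\<exists>z::'x. z \<noteq> a"
proof (rule ccontr)
  assume "\<not> (\<exists>z::'x. z \<noteq> a)"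
  then have "card (UNIV :: 'x set) \<le> Suc 0"
    using card_le_Suc0_iff_eq[of "UNIV :: 'x set"] by (metis finite)
  then show False using assms by simp
qed

subsection \<open>Profiles, option sets and vetoes\<close>

lemma profile_update: "P \<in> profiles n \<Longrightarrow> i < n \<Longrightarrow> R \<in> prefs \<Longrightarrow> P(i := R) \<in> profiles n"
  unfolding profiles_def by auto

lemma constant_profile: "R \<in> prefs \<Longrightarrow> (\<lambda>j. if j < n then R else {}) \<in> profiles n"
  unfolding profiles_def by auto

lemma option_setI: "P \<in> profiles n \<Longrightarrow> f (P(i := R)) \<in> option_set n f i R"
  unfolding option_set_def by blast

lemma option_set_of_agent_at_own_pref:
  "P \<in> profiles n \<Longrightarrow> P i = R \<Longrightarrow> f P \<in> option_set n f i R"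
  by (metis fun_upd_triv option_setI)

lemma vetoedI: "R \<in> prefs \<Longrightarrow> x \<notin> option_set n f i R \<Longrightarrow> x \<in> vetoed n f i"
  unfolding vetoed_def by blast

lemma strongly_vetoesD:
  "strongly_vetoes n f i x \<Longrightarrow> R \<in> prefs \<Longrightarrow> pref_top R \<noteq> x \<Longrightarrow> x \<notin> option_set n f i R"
  unfolding strongly_vetoes_def veto_prefs_def by blast

lemma strongly_vetoed_subset_vetoed:
  fixes f :: "(nat \<Rightarrow> ('x::finite \<times> 'x) set) \<Rightarrow> 'x"
  assumes "card (UNIV :: 'x set) \<ge> 2"
  shows "strongly_vetoed n f i \<subseteq> vetoed n f i"
proof
  fix y assume "y \<in> strongly_vetoed n f i"
  obtain a where "a \<noteq> y"
    using ex_other[OF assms] by blast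
  then obtain R where "R \<in> prefs" "pref_top R = a"
    using ex_pref_top_bottom by blast
  then show "y \<in> vetoed n f i"
    using \<open>y \<in> strongly_vetoed n f i\<close> \<open>a \<noteq> y\<close>
    by (auto simp: strongly_vetoed_def intro: vetoedI dest: strongly_vetoesD)
qed

lemma anonymous_option_set_eq:
  assumes an: "anonymous n f" and i: "i < n" and j: "j < n" and R: "R \<in> prefs"
  shows "option_set n f i R = option_set n f j R"
proof -
  have "option_set n f i R \<subseteq> option_set n f j R" if i: "i < n" and j: "j < n" for i j
  proof
    fix x assume "x \<in> option_set n f i R"
    then obtain P where P: "P \<in> profiles n" and x: "x = f (P(i := R))"
      unfolding option_set_def by auto
    define \<sigma> where "\<sigma> = Transposition.transpose i j"
    have \<sigma>: "\<sigma> permutes {0..<n}"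
      unfolding \<sigma>_def using i j by (intro permutes_swap_id) auto
    have "P \<circ> \<sigma> \<in> profiles n"
      using P i j by (auto simp: profiles_def \<sigma>_def transpose_def)
    moreover have "P(i := R) \<circ> \<sigma> = (P \<circ> \<sigma>)(j := R)"
      by (auto simp: \<sigma>_def transpose_def fun_eq_iff)
    moreover have "x = f (P(i := R) \<circ> \<sigma>)"
      using an profile_update[OF P i R] \<sigma> unfolding x anonymous_def by blast
    ultimately show "x \<in> option_set n f j R"
      by (auto intro: option_setI)
  qed
  then show ?thesis using i j by blast
qed

lemma anonymous_vetoed_eq:
  "anonymous n f \<Longrightarrow> i < n \<Longrightarrow> j < n \<Longrightarrow> vetoed n f i = vetoed n f j"
  unfolding vetoed_def using anonymous_option_set_eq by blast

lemma anonymous_strongly_vetoed_eq: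
  assumes "anonymous n f" "i < n" "j < n"
  shows "strongly_vetoed n f i = strongly_vetoed n f j"
proof -
  have "veto_prefs n f i x = veto_prefs n f j x" for x
    using anonymous_option_set_eq[OF assms] unfolding veto_prefs_def by blast
  then show ?thesis
    unfolding strongly_vetoed_def strongly_vetoes_def by simp
qed

subsection \<open>Efficient tops-only rules\<close>

locale efficient_tops_only_rule =
  fixes n :: nat and f :: "(nat \<Rightarrow> ('x::finite \<times> 'x) set) \<Rightarrow> 'x"
  assumes efficient: "efficient n f" and tops_only: "tops_only n f"
begin

lemma agents_nonempty: "0 < n"
proof (rule ccontr)
  assume "\<not> 0 < n"
  then have "(\<lambda>_. {}) \<in> profiles n"
    by (simp add: profiles_def)
  then show False
    using efficient \<open>\<not> 0 < n\<close> by (auto simp: efficient_def)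
qed

lemma outcome_is_some_top:
  assumes P: "P \<in> profiles n"
  shows "\<exists>j<n. f P = pref_top (P j)"
proof (rule ccontr)
  assume no_top: "\<not> (\<exists>j<n. f P = pref_top (P j))"
  define z where "z = f P"
  \<comment> \<open>Push \<open>z\<close> to the bottom of every preference, keeping the tops: the outcome stays
    \<open>z\<close>, which is then Pareto dominated.\<close>
  have "\<exists>Q. Q \<in> prefs \<and> pref_top Q = pref_top (P j) \<and> (\<forall>y. y \<noteq> z \<longrightarrow> (y, z) \<in> Q)"
    if "j < n" for j
  proof -
    have "pref_top (P j) \<noteq> z"
      using no_top that unfolding z_def by auto
    then show ?thesis
      using ex_pref_top_bottom by blast
  qed
  then obtain Q where Q: "\<And>j. j < n \<Longrightarrow>
      Q j \<in> prefs \<and> pref_top (Q j) = pref_top (P j) \<and> (\<forall>y. y \<noteq> z \<longrightarrow> (y, z) \<in> Q j)"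
    by metis
  define P' where "P' j = (if j < n then Q j else {})" for j
  have P': "P' \<in> profiles n"
    using Q by (simp add: profiles_def P'_def)
  have "\<forall>j<n. pref_top (P j) = pref_top (P' j)"
    using Q by (simp add: P'_def)
  then have "f P' = z"
    using tops_only P P' unfolding tops_only_def z_def by metis
  moreover have "pref_top (P 0) \<noteq> z"
    using no_top agents_nonempty unfolding z_def by auto
  ultimately have "\<forall>j<n. (pref_top (P 0), f P') \<in> P' j"
    using Q by (simp add: P'_def)
  then show False
    using efficient P' unfolding efficient_def by blast
qed

lemma pref_top_in_option_set:
  assumes i: "i < n" and R: "R \<in> prefs"
  shows "pref_top R \<in> option_set n f i R"
proof -
  define P where "P j = (if j < n then R else {})" for j
  have P: "P \<in> profiles n"
    unfolding P_def using constant_profile[OF R] .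
  obtain j where "j < n" "f P = pref_top (P j)"
    using outcome_is_some_top[OF P] by blast
  then show ?thesis
    using option_set_of_agent_at_own_pref[OF P, of i R f] i by (simp add: P_def)
qed

lemma option_set_eq_if_same_top:
  assumes i: "i < n" and R: "R \<in> prefs" and R': "R' \<in> prefs"
    and same_top: "pref_top R = pref_top R'"
  shows "option_set n f i R = option_set n f i R'"
proof -
  have "f (P(i := R)) = f (P(i := R'))" if P: "P \<in> profiles n" for P
  proof -
    have "\<forall>j<n. pref_top ((P(i := R)) j) = pref_top ((P(i := R')) j)"
      using same_top by simp
    then show ?thesis
      using tops_only profile_update[OF P i R] profile_update[OF P i R']
      unfolding tops_only_def by blast
  qed
  then show ?thesis
    unfolding option_set_def by (metis (no_types, lifting))
qed

lemma best_option_eq_pref_top: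
  assumes "i < n" "R \<in> prefs"
  shows "best R (option_set n f i R) = pref_top R"
  using best_eqI[OF assms(2) pref_top_in_option_set[OF assms]] pref_top_above[OF assms(2)]
  by blast

lemma NOM_veto_extends_to_other_tops:
  assumes nom: "NOM n f" and i: "i < n"
    and Ra: "Ra \<in> prefs" "x \<notin> option_set n f i Ra"
    and R: "R \<in> prefs" "pref_top R \<noteq> x"
  shows "x \<notin> option_set n f i R"
proof
  assume x_opt: "x \<in> option_set n f i R"
  obtain R0 where R0: "R0 \<in> prefs" "pref_top R0 = pref_top R" "\<forall>y. y \<noteq> x \<longrightarrow> (y, x) \<in> R0"
    using ex_pref_top_bottom[OF R(2)] by blast
  have option_set_R0: "option_set n f i R0 = option_set n f i R"
    using option_set_eq_if_same_top[OF i R0(1) R(1) R0(2)] .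
  then have "x \<in> option_set n f i R0"
    using x_opt by simp
  then obtain P where P: "P \<in> profiles n" "f (P(i := R0)) = x"
    unfolding option_set_def by blast
  have "f (P(i := Ra)) \<noteq> x"
    using option_setI[OF P(1), of f i Ra] Ra(2) by auto
  then have "manipulation n f i R0 Ra"
    using P R0(3) unfolding manipulation_def by auto
  moreover have "worst R0 (option_set n f i R0) = x"
    using worst_eqI[OF R0(1)] x_opt option_set_R0 R0(3) by auto
  moreover have "worst R0 (option_set n f i Ra) \<noteq> x"
    using worst_in[OF R0(1), of "option_set n f i Ra"] pref_top_in_option_set[OF i Ra(1)] Ra(2)
    by auto
  ultimately have "obvious_manipulation n f i R0 Ra"
    using R0(3) unfolding obvious_manipulation_def by auto
  then show False
    using nom i R0(1) Ra(1) unfolding NOM_def by blast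
qed

lemma NOM_vetoed_imp_strongly_vetoes:
  assumes nom: "NOM n f" and i: "i < n" and x: "x \<in> vetoed n f i"
  shows "strongly_vetoes n f i x"
proof -
  obtain Ra where Ra: "Ra \<in> prefs" "x \<notin> option_set n f i Ra"
    using x unfolding vetoed_def by blast
  have "x \<notin> option_set n f i R \<longleftrightarrow> pref_top R \<noteq> x" if R: "R \<in> prefs" for R
    using pref_top_in_option_set[OF i R] NOM_veto_extends_to_other_tops[OF nom i Ra R] by auto
  then show ?thesis
    unfolding strongly_vetoes_def veto_prefs_def by blast
qed

lemma strongly_vetoes_of_distinct_agents_eq:
  assumes i: "i < n" and j: "j < n" and "i \<noteq> j"
    and z: "strongly_vetoes n f i z" and x: "strongly_vetoes n f j x"
  shows "x = z"
proof (rule ccontr)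
  assume "x \<noteq> z"
  obtain Rx where Rx: "Rx \<in> prefs" "pref_top Rx = x"
    using ex_pref_top_bottom[OF \<open>x \<noteq> z\<close>] by blast
  obtain Rz where Rz: "Rz \<in> prefs" "pref_top Rz = z"
    using ex_pref_top_bottom[OF \<open>x \<noteq> z\<close>[symmetric]] by blast
  define P where "P = (\<lambda>k. if k < n then Rz else {})(i := Rx)"
  have P: "P \<in> profiles n"
    unfolding P_def using profile_update[OF constant_profile[OF Rz(1)] i Rx(1)] .
  have "f P \<in> option_set n f i Rx"
    using option_set_of_agent_at_own_pref[OF P, of i Rx] by (simp add: P_def)
  then have "f P \<noteq> z"
    using strongly_vetoesD[OF z Rx(1)] Rx(2) \<open>x \<noteq> z\<close> by auto
  moreover have "f P \<in> option_set n f j Rz"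
    using option_set_of_agent_at_own_pref[OF P, of j Rz] j \<open>i \<noteq> j\<close> by (simp add: P_def)
  then have "f P \<noteq> x"
    using strongly_vetoesD[OF x Rz(1)] Rz(2) \<open>x \<noteq> z\<close> by auto
  moreover obtain k where "k < n" "f P = pref_top (P k)"
    using outcome_is_some_top[OF P] by blast
  then have "f P = x \<or> f P = z"
    using Rx(2) Rz(2) by (simp add: P_def)
  ultimately show False
    by blast
qed

lemma NOM_vetoed_cases:
  assumes nom: "NOM n f" and an: "anonymous n f" and n: "n \<ge> 2"
    and card: "card (UNIV :: 'x set) \<ge> 2" and i: "i < n"
  shows "vetoed n f i = {} \<or> (\<exists>y. strongly_vetoed n f i = {y} \<and> vetoed n f i = {y})"
proof (cases "vetoed n f i = {}")
  case False
  then obtain y where y: "y \<in> vetoed n f i"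
    by blast
  define j where "j = (if i = 0 then 1 else 0 :: nat)"
  have j: "j < n" "i \<noteq> j"
    using n i unfolding j_def by auto
  have "strongly_vetoes n f j y"
    using NOM_vetoed_imp_strongly_vetoes[OF nom j(1)] y anonymous_vetoed_eq[OF an i j(1)] by simp
  then have "x = y" if "x \<in> vetoed n f i" for x
    using strongly_vetoes_of_distinct_agents_eq[OF i j NOM_vetoed_imp_strongly_vetoes[OF nom i that]]
    by simp
  then have vetoed_y: "vetoed n f i = {y}"
    using y by blast
  moreover have "strongly_vetoed n f i = {y}"
    using strongly_vetoed_subset_vetoed[OF card, of n f i] vetoed_y
      NOM_vetoed_imp_strongly_vetoes[OF nom i y]
    unfolding strongly_vetoed_def by blast
  ultimately show ?thesis
    by blast
qed simp

lemma worst_option_in_option_set: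
  assumes card: "card (UNIV :: 'x set) \<ge> 2" and i: "i < n"
    and R: "R \<in> prefs" and R': "R' \<in> prefs"
    and single: "vetoed n f i \<subseteq> {y}" and strong: "vetoed n f i \<subseteq> strongly_vetoed n f i"
  shows "worst R (option_set n f i R) \<in> option_set n f i R'"
proof -
  define w where "w = worst R (option_set n f i R)"
  have w_opt: "w \<in> option_set n f i R"
    using worst_in[OF R, of "option_set n f i R"] pref_top_in_option_set[OF i R]
    unfolding w_def by auto
  have "w \<in> option_set n f i R'"
  proof (rule ccontr)
    assume "w \<notin> option_set n f i R'"
    then have "w \<in> vetoed n f i"
      by (rule vetoedI[OF R'])
    then have w_y: "w = y" and w_strong: "strongly_vetoes n f i w"
      using single strong by (auto simp: strongly_vetoed_def)
    have top: "pref_top R = w"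
      using strongly_vetoesD[OF w_strong R] w_opt by blast
    obtain z where "z \<noteq> w"
      using ex_other[OF card] by blast
    then have "z \<notin> vetoed n f i"
      using single w_y by blast
    then have "z \<in> option_set n f i R"
      using vetoedI[OF R] by blast
    then have "(z, w) \<in> R"
      using worst_below[OF R] \<open>z \<noteq> w\<close> unfolding w_def by auto
    then show False
      using not_above_pref_top[OF R] top by blast
  qed
  then show ?thesis
    unfolding w_def .
qed

lemma not_obvious_manipulation_if_single_strong_veto:
  assumes card: "card (UNIV :: 'x set) \<ge> 2" and i: "i < n"
    and R: "R \<in> prefs" and R': "R' \<in> prefs"
    and single: "vetoed n f i \<subseteq> {y}" and strong: "vetoed n f i \<subseteq> strongly_vetoed n f i"
  shows "\<not> obvious_manipulation n f i R R'"
proof -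
  have "(worst R (option_set n f i R'), worst R (option_set n f i R)) \<notin> R"
    using worst_not_above[OF R _ worst_option_in_option_set[OF assms]] by simp
  moreover have "(best R (option_set n f i R'), best R (option_set n f i R)) \<notin> R"
    using not_above_pref_top[OF R] best_option_eq_pref_top[OF i R] by simp
  ultimately show ?thesis
    unfolding obvious_manipulation_def by blast
qed

end

theorem corollary2:
  fixes n :: nat and f :: "(nat \<Rightarrow> ('x::finite \<times> 'x) set) \<Rightarrow> 'x"
  assumes "n \<ge> 2" and "card (UNIV :: 'x set) \<ge> 2"
    and "onto n f" and "efficient n f" and "anonymous n f" and "tops_only n f"
  shows "NOM n f \<longleftrightarrow>
    ((\<forall>i<n. vetoed n f i = {}) \<or>
     (\<exists>y. \<forall>i<n. strongly_vetoed n f i = {y} \<and> vetoed n f i = {y}))"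
proof -
  interpret efficient_tops_only_rule n f
    using assms(4,6) by unfold_locales
  have vetoed_eq: "vetoed n f i = vetoed n f 0"
    and strongly_vetoed_eq: "strongly_vetoed n f i = strongly_vetoed n f 0" if "i < n" for i
    using anonymous_vetoed_eq[OF assms(5) that] anonymous_strongly_vetoed_eq[OF assms(5) that]
      assms(1) by auto
  show ?thesis
  proof
    assume "NOM n f"
    then have "vetoed n f 0 = {} \<or> (\<exists>y. strongly_vetoed n f 0 = {y} \<and> vetoed n f 0 = {y})"
      using NOM_vetoed_cases[OF _ assms(5,1,2)] assms(1) by simp
    then show "(\<forall>i<n. vetoed n f i = {}) \<or>
        (\<exists>y. \<forall>i<n. strongly_vetoed n f i = {y} \<and> vetoed n f i = {y})"
      using vetoed_eq strongly_vetoed_eq by blast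
  next
    assume "(\<forall>i<n. vetoed n f i = {}) \<or>
        (\<exists>y. \<forall>i<n. strongly_vetoed n f i = {y} \<and> vetoed n f i = {y})"
    then have "\<exists>y. vetoed n f i \<subseteq> {y} \<and> vetoed n f i \<subseteq> strongly_vetoed n f i" if "i < n" for i
      using that by blast
    then show "NOM n f"
      unfolding NOM_def using not_obvious_manipulation_if_single_strong_veto[OF assms(2)] by blast
  qed
qed

end
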